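(* Let $\mathcal{K}$ be a tame knot class in $\mathbb{R}^3$, $\gamma\in\mathcal{C}(\mathcal{K})\cap C^{1,1}(\mathbb{S}_1,\mathbb{R}^3)$, and $p_n\in\mathcal{P}_n$ with $p_n\to\gamma$ in $W^{1,\infty}(\mathbb{S}_1,\mathbb{R}^3)$. Let $s_n\ne t_n$ be parameters with $s_n\to s$, $t_n\to t$, $s\ne t$, such that $(p_n(s_n),p_n(t_n))\in\mathrm{dcrit}(p_n)$ for all $n$. Then $(\gamma(s),\gamma(t))\in\mathrm{dcrit}(\gamma)$.
   Context: $\mathbb{S}_1=\mathbb{R}/\mathbb{Z}$. $\mathcal{C}$ is the set of $\gamma\in W^{1,\infty}(\mathbb{S}_1,\mathbb{R}^3)$ with $|\gamma'|=1$ a.e.; $C^{1,1}$ means $\gamma'$ Lipschitz. $\mathcal{P}_n\subset\mathcal{C}$ is the set of arc length parametrisations of closed equilateral polygons with $n$ edges. For $p\in\mathcal{P}_n$, $\mathrm{dcrit}(p)$ is the set of pairs of distinct points $x=p(t)$, $y=p(s)$ with $s$ a local extremum of $u\mapsto|p(t)-p(u)|^2$ and $t$ a local extremum of $v\mapsto|p(v)-p(s)|^2$. For $\gamma\in\mathcal{C}\cap C^{1}$, $\mathrm{dcrit}(\gamma)$ is the set of pairs $(\gamma(t),\gamma(s))$ of distinct points with $\langle\gamma'(t),\gamma(t)-\gamma(s)\rangle=\langle\gamma'(s),\gamma(t)-\gamma(s)\rangle=0$. A tame knot class $\mathcal{K}$ is an ambient isotopy class of tame knots in $\mathbb{R}^3$;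 $\mathcal{C}(\mathcal{K})$ is the set of injective $\gamma\in\mathcal{C}$ whose image is a knot in $\mathcal{K}$. *)

theory Defs
  imports "HOL-Analysis.Analysis"
begin

type_synonym curve = "real \<Rightarrow> real^3"

text \<open>Maps on S_1 = R/Z are represented as 1-periodic maps on the reals.\<close>
definition periodic1 :: "curve \<Rightarrow> bool" where
  "periodic1 g \<longleftrightarrow> (\<forall>x. g (x + 1) = g x)"

text \<open>The class C: W^{1,inf} (= Lipschitz) periodic curves with |g'| = 1 a.e.\<close>
definition arclength_curves :: "curve set" where
  "arclength_curves = {g. periodic1 g \<and> (\<exists>L. \<forall>x y. dist (g x) (g y) \<le> L * dist x y) \<and>
      (AE t in lborel. g differentiable (at t) \<and> norm (vector_derivative g (at t)) = 1)}"

definition C11 :: "curve \<Rightarrow> bool" where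
  "C11 g \<longleftrightarrow> (\<exists>g'. (\<forall>t. (g has_vector_derivative g' t) (at t)) \<and>
      (\<exists>L. \<forall>x y. norm (g' x - g' y) \<le> L * \<bar>x - y\<bar>))"

text \<open>P_n: arc length parametrisations of closed equilateral polygons with n edges
  (vertices at parameters a + k/n, affine in between).\<close>
definition polygons :: "nat \<Rightarrow> curve set" where
  "polygons n = {p. p \<in> arclength_curves \<and> n > 0 \<and>
      (\<exists>a. \<forall>k::int. \<forall>l\<in>{0..1::real}.
         p (a + (of_int k + l) / real n) = (1 - l) *\<^sub>R p (a + of_int k / real n)
                                            + l *\<^sub>R p (a + (of_int k + 1) / real n))}"

definition local_extremum :: "(real \<Rightarrow> real) \<Rightarrow> real \<Rightarrow> bool" where
  "local_extremum f x \<longleftrightarrow> (\<exists>e>0. (\<forall>y\<in>ball x e. f y \<le> f x) \<or> (\<forall>y\<in>ball x e. f x \<le> f y))"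

definition dcrit_poly :: "curve \<Rightarrow> ((real^3) \<times> (real^3)) set" where
  "dcrit_poly p = {(p t, p s) | t s. p t \<noteq> p s \<and>
      local_extremum (\<lambda>u. (norm (p t - p u))\<^sup>2) s \<and>
      local_extremum (\<lambda>v. (norm (p v - p s))\<^sup>2) t}"

definition dcrit_C1 :: "curve \<Rightarrow> ((real^3) \<times> (real^3)) set" where
  "dcrit_C1 g = {(g t, g s) | t s. g t \<noteq> g s \<and>
      inner (vector_derivative g (at t)) (g t - g s) = 0 \<and>
      inner (vector_derivative g (at s)) (g t - g s) = 0}"

definition knot :: "(real^3) set \<Rightarrow> bool" where
  "knot S \<longleftrightarrow> (\<exists>c. continuous_on UNIV c \<and> periodic1 c \<and> inj_on c {0..<1} \<and> S = c ` {0..1})"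

definition polygonal_knot :: "(real^3) set \<Rightarrow> bool" where
  "polygonal_knot S \<longleftrightarrow> knot S \<and> (\<exists>vs. vs \<noteq> [] \<and>
      S = (\<Union>i<length vs. closed_segment (vs ! i) (vs ! ((i + 1) mod length vs))))"

definition ambient_isotopic :: "(real^3) set \<Rightarrow> (real^3) set \<Rightarrow> bool" where
  "ambient_isotopic A B \<longleftrightarrow> (\<exists>H :: real \<times> (real^3) \<Rightarrow> real^3.
      continuous_on ({0..1} \<times> UNIV) H \<and>
      (\<forall>t\<in>{0..1}. \<exists>g. homeomorphism UNIV UNIV (\<lambda>x. H (t, x)) g) \<and>
      (\<forall>x. H (0, x) = x) \<and> (\<lambda>x. H (1, x)) ` A = B)"

definition tame_knot :: "(real^3) set \<Rightarrow> bool" where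
  "tame_knot S \<longleftrightarrow> knot S \<and> (\<exists>P. polygonal_knot P \<and> ambient_isotopic S P)"

definition tame_knot_class :: "(real^3) set set \<Rightarrow> bool" where
  "tame_knot_class K \<longleftrightarrow> (\<exists>k. tame_knot k \<and> K = {k'. tame_knot k' \<and> ambient_isotopic k k'})"

definition curves_in_class :: "(real^3) set set \<Rightarrow> curve set" where
  "curves_in_class K = {g. g \<in> arclength_curves \<and> inj_on g {0..<1} \<and> g ` {0..1} \<in> K}"

definition W1inf_tendsto :: "(nat \<Rightarrow> curve) \<Rightarrow> curve \<Rightarrow> bool" where
  "W1inf_tendsto p g \<longleftrightarrow> (\<forall>e>0. \<forall>\<^sub>F n in sequentially.
      (\<forall>t. norm (p n t - g t) \<le> e) \<and>
      (AE t in lborel. norm (vector_derivative (p n) (at t) - vector_derivative g (at t)) \<le> e))"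

definition S1_tendsto :: "(nat \<Rightarrow> real) \<Rightarrow> real \<Rightarrow> bool" where
  "S1_tendsto x y \<longleftrightarrow> (\<exists>k :: nat \<Rightarrow> int. (\<lambda>n. x n - of_int (k n)) \<longlonglongrightarrow> y)"

definition S1_eq :: "real \<Rightarrow> real \<Rightarrow> bool" where
  "S1_eq x y \<longleftrightarrow> x - y \<in> \<int>"

end

theory Submission
  imports Defs
begin

text \<open>
  By symmetry it suffices to show \<open>\<gamma>'(t) \<perp> \<gamma>(s) - \<gamma>(t)\<close>.  The argument has three parts.
  (1) Discrete first order condition: at a local extremum of \<open>u \<mapsto> |D - p(u)|\<^sup>2\<close> the left and
  right edge velocities of a polygon have inner products with \<open>D - p(u)\<close> of opposite signs;
  since both edge velocities are \<open>(\<epsilon> + Lip(\<gamma>')/n)\<close>-close to \<open>\<gamma>'(u)\<close>, the tangent \<open>\<gamma>'(u)\<close> is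
  almost orthogonal to \<open>D - p(u)\<close>.
  (2) Criticality only locates the points \<open>p\<^sub>n(t\<^sub>n)\<close>, not the parameters, so the extremal
  parameter \<open>t'\<close> need not be near \<open>t\<close>; but \<open>\<gamma>(t')\<close> is near \<open>\<gamma>(t)\<close>, and by injectivity and
  compactness \<open>\<gamma>'\<close> is continuous as a function of the point on \<open>\<gamma>\<close>.
  (3) An abstract limit lemma turns these approximate orthogonalities into exact orthogonality.
\<close>

lemma periodic1_shift_int:
  assumes "periodic1 g"
  shows "g (x + of_int k) = g x"
proof -
  have nat_shift: "g (y + real m) = g y" for y m
  proof (induction m)
    case (Suc m)
    have "g (y + real (Suc m)) = g ((y + real m) + 1)" by (simp add: algebra_simps)
    also have "\<dots> = g (y + real m)" using assms by (simp add: periodic1_def)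
    finally show ?case using Suc by simp
  qed simp
  show ?thesis
  proof (cases k rule: int_cases2)
    case (nonneg m)
    then show ?thesis using nat_shift by simp
  next
    case (nonpos m)
    then show ?thesis using nat_shift[of "x - real m" m] by simp
  qed
qed

lemma periodic1_frac:
  assumes "periodic1 g"
  shows "g (frac x) = g x"
  using periodic1_shift_int[OF assms, of x "- \<lfloor>x\<rfloor>"] by (simp add: frac_def)

lemma periodic1_inj_eq:
  assumes per: "periodic1 g" and inj: "inj_on g {0..<1}" and eq: "g x = g y"
  shows "S1_eq x y"
proof -
  have "g (frac x) = g (frac y)" using eq periodic1_frac[OF per] by simp
  then have "frac x = frac y" using inj by (auto simp: frac_lt_1 dest: inj_onD)
  then have "x - y = of_int (\<lfloor>x\<rfloor> - \<lfloor>y\<rfloor>)" by (simp add: frac_def)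
  then show ?thesis unfolding S1_eq_def by simp
qed

lemma periodic1_S1_eq:
  assumes "periodic1 g" and "S1_eq x y"
  shows "g x = g y"
proof -
  from assms(2) obtain k where "x = y + of_int k"
    unfolding S1_eq_def by (metis Ints_cases add.commute diff_add_cancel)
  then show ?thesis using periodic1_shift_int[OF assms(1)] by simp
qed

lemma C11_periodic_derivative:
  assumes "C11 \<gamma>" and per: "periodic1 \<gamma>"
  obtains Lg where "\<And>t. (\<gamma> has_vector_derivative vector_derivative \<gamma> (at t)) (at t)"
    and "\<And>x y. norm (vector_derivative \<gamma> (at x) - vector_derivative \<gamma> (at y)) \<le> Lg * \<bar>x - y\<bar>"
    and "continuous_on UNIV (\<lambda>t. vector_derivative \<gamma> (at t))"
    and "periodic1 (\<lambda>t. vector_derivative \<gamma> (at t))"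
proof -
  from assms(1) obtain g' Lg where der: "\<And>t. (\<gamma> has_vector_derivative g' t) (at t)"
    and Lip: "\<And>x y. norm (g' x - g' y) \<le> Lg * \<bar>x - y\<bar>"
    unfolding C11_def by blast
  have g': "vector_derivative \<gamma> (at t) = g' t" for t
    using der by (rule vector_derivative_at)
  have "lipschitz_on Lg UNIV g'"
  proof (rule lipschitz_onI)
    have "norm (g' 0 - g' 1) \<le> Lg" using Lip[of 0 1] by simp
    then show "0 \<le> Lg" using norm_ge_zero order_trans by blast
  qed (simp add: Lip dist_norm dist_real_def)
  then have cont: "continuous_on UNIV g'" by (rule lipschitz_on_continuous_on)
  have "g' (x + 1) = g' x" for x
  proof -
    have shift: "((\<lambda>y. y + 1) has_vector_derivative 1) (at x)"
      by (auto intro!: derivative_eq_intros)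
    have "((\<gamma> \<circ> (\<lambda>y. y + 1)) has_vector_derivative g' (x + 1)) (at x)"
      using vector_diff_chain_at[OF shift der[of "x + 1"]] by simp
    moreover have "\<gamma> \<circ> (\<lambda>y. y + 1) = \<gamma>" using per by (auto simp: periodic1_def)
    ultimately have "(\<gamma> has_vector_derivative g' (x + 1)) (at x)" by simp
    then show ?thesis using der[of x] by (rule vector_derivative_unique_at)
  qed
  then have "periodic1 g'" unfolding periodic1_def by blast
  moreover have "(\<lambda>t. vector_derivative \<gamma> (at t)) = g'" using g' by (rule ext)
  ultimately show ?thesis using that[of Lg] der Lip cont by (simp add: g')
qed

definition affine_edges :: "(real \<Rightarrow> 'a::real_vector) \<Rightarrow> real \<Rightarrow> nat \<Rightarrow> bool" where
  "affine_edges p a n \<longleftrightarrow> (\<forall>k::int. \<forall>l\<in>{0..1::real}.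
     p (a + (of_int k + l) / real n) = (1 - l) *\<^sub>R p (a + of_int k / real n)
                                        + l *\<^sub>R p (a + (of_int k + 1) / real n))"

definition edge_velocity :: "(real \<Rightarrow> 'a::real_vector) \<Rightarrow> real \<Rightarrow> nat \<Rightarrow> int \<Rightarrow> 'a" where
  "edge_velocity p a n k = real n *\<^sub>R (p (a + (of_int k + 1) / real n) - p (a + of_int k / real n))"

lemma polygons_affine_edges:
  assumes "p \<in> polygons n"
  obtains a where "n > 0" and "affine_edges p a n"
  using assms unfolding polygons_def affine_edges_def by blast

lemma affine_edge_increment:
  assumes n: "n > 0" and aff: "affine_edges p a n"
    and y: "y \<in> {a + of_int k / real n .. a + (of_int k + 1) / real n}"
    and z: "z \<in> {a + of_int k / real n .. a + (of_int k + 1) / real n}"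
  shows "p z - p y = (z - y) *\<^sub>R edge_velocity p a n k"
proof -
  define v0 where "v0 = p (a + of_int k / real n)"
  define v1 where "v1 = p (a + (of_int k + 1) / real n)"
  have on_edge: "p x = v0 + ((x - a) * real n - of_int k) *\<^sub>R (v1 - v0)"
    if "x \<in> {a + of_int k / real n .. a + (of_int k + 1) / real n}" for x
  proof -
    define l where "l = (x - a) * real n - of_int k"
    have l: "l \<in> {0..1}" using that n by (auto simp: l_def field_simps)
    have x: "x = a + (of_int k + l) / real n" using n by (simp add: l_def field_simps)
    have "p x = (1 - l) *\<^sub>R v0 + l *\<^sub>R v1"
      using aff l unfolding affine_edges_def v0_def v1_def x by blast
    then show ?thesis by (simp add: l_def algebra_simps)
  qed
  show ?thesis
    unfolding on_edge[OF y] on_edge[OF z] edge_velocity_def v0_def[symmetric] v1_def[symmetric]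
    by (simp add: algebra_simps)
qed

lemma affine_edge_derivative:
  assumes n: "n > 0" and aff: "affine_edges p a n"
    and y: "y \<in> {a + of_int k / real n <..< a + (of_int k + 1) / real n}"
  shows "vector_derivative p (at y) = edge_velocity p a n k"
proof -
  let ?E = "{a + of_int k / real n <..< a + (of_int k + 1) / real n}"
  have "((\<lambda>u. p y + (u - y) *\<^sub>R edge_velocity p a n k) has_vector_derivative edge_velocity p a n k) (at y)"
    by (auto intro!: derivative_eq_intros)
  then have "(p has_vector_derivative edge_velocity p a n k) (at y)"
  proof (rule has_vector_derivative_transform_within_open[where S = ?E])
    fix u assume "u \<in> ?E"
    then show "p y + (u - y) *\<^sub>R edge_velocity p a n k = p u"
      using affine_edge_increment[OF n aff, of y k u] y by (auto simp: algebra_simps)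
  qed (use y in auto)
  then show ?thesis by (rule vector_derivative_at)
qed

lemma AE_lborel_witness:
  fixes a b :: real
  assumes "AE y in lborel. P y" and "a < b"
  shows "\<exists>y. a < y \<and> y < b \<and> P y"
proof (rule ccontr)
  assume none: "\<not> ?thesis"
  from assms(1) obtain N where N: "{x \<in> space lborel. \<not> P x} \<subseteq> N" "emeasure lborel N = 0" "N \<in> sets lborel"
    by (rule AE_E)
  have "{a<..<b} \<subseteq> N" using N(1) none by auto
  then have "emeasure lborel {a<..<b} \<le> emeasure lborel N" by (rule emeasure_mono[OF _ N(3)])
  then have "ennreal (b - a) = 0" using N(2) assms(2) by simp
  with assms(2) show False by simp
qed

text \<open>If \<open>p'\<close> is a.e. \<open>e\<close>-close to a Lipschitz field \<open>g\<close>, every edge velocity is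
  \<open>(e + Lg/n)\<close>-close to \<open>g\<close> anywhere on that (closed) edge, since some interior point of the edge
  satisfies the a.e. estimate.\<close>
lemma edge_velocity_close:
  assumes n: "n > 0" and aff: "affine_edges p a n"
    and AE: "AE y in lborel. norm (vector_derivative p (at y) - g' y) \<le> e"
    and Lip: "\<And>x y. norm (g' x - g' y) \<le> Lg * \<bar>x - y\<bar>"
    and z: "z \<in> {a + of_int k / real n .. a + (of_int k + 1) / real n}"
  shows "norm (edge_velocity p a n k - g' z) \<le> e + Lg / real n"
proof -
  have "norm (g' 0 - g' 1) \<le> Lg" using Lip[of 0 1] by simp
  then have Lg: "Lg \<ge> 0" using norm_ge_zero order_trans by blast
  have edge: "a + of_int k / real n < a + (of_int k + 1) / real n"
    using n by (simp add: divide_strict_right_mono)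
  obtain y where y: "y \<in> {a + of_int k / real n <..< a + (of_int k + 1) / real n}"
    and close: "norm (vector_derivative p (at y) - g' y) \<le> e"
    using AE_lborel_witness[OF AE edge] by auto
  have "\<bar>y - z\<bar> \<le> 1 / real n" using y z n by (auto simp: field_simps abs_if)
  then have "norm (g' y - g' z) \<le> Lg / real n"
    using Lip[of y z] mult_left_mono[OF _ Lg] by fastforce
  moreover have "norm (edge_velocity p a n k - g' z) \<le> norm (edge_velocity p a n k - g' y) + norm (g' y - g' z)"
    using norm_triangle_ineq[of "edge_velocity p a n k - g' y" "g' y - g' z"] by simp
  ultimately show ?thesis
    using close affine_edge_derivative[OF n aff y] by simp
qed

text \<open>Every parameter \<open>x\<close> of a polygon has a right edge (velocity \<open>w\<close>) and a left edge
  (velocity \<open>v\<close>), both velocities close to \<open>g x\<close>; \<open>x\<close> may be a vertex, so \<open>w \<noteq> v\<close> in general.\<close>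
lemma polygon_one_sided_velocities:
  assumes n: "n > 0" and aff: "affine_edges p a n"
    and AE: "AE y in lborel. norm (vector_derivative p (at y) - g' y) \<le> e"
    and Lip: "\<And>x y. norm (g' x - g' y) \<le> Lg * \<bar>x - y\<bar>"
  obtains hr w hl v where "hr > 0" and "\<And>h. 0 \<le> h \<Longrightarrow> h \<le> hr \<Longrightarrow> p (x + h) = p x + h *\<^sub>R w"
    and "hl > 0" and "\<And>h. 0 \<le> h \<Longrightarrow> h \<le> hl \<Longrightarrow> p (x - h) = p x - h *\<^sub>R v"
    and "norm (w - g' x) \<le> e + Lg / real n" and "norm (v - g' x) \<le> e + Lg / real n"
proof -
  define X where "X = (x - a) * real n"
  have x: "x = a + X / real n" using n by (simp add: X_def)
  define kr where "kr = \<lfloor>X\<rfloor>"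
  define kl where "kl = \<lceil>X\<rceil> - 1"
  have "of_int kr \<le> X" "X < of_int kr + 1" "of_int kl < X" "X \<le> of_int kl + 1"
    using floor_correct[of X] ceiling_correct[of X] by (simp_all add: kr_def kl_def)
  then have kr: "a + of_int kr / real n \<le> x" "x < a + (of_int kr + 1) / real n"
    and kl: "a + of_int kl / real n < x" "x \<le> a + (of_int kl + 1) / real n"
    using n unfolding x by (simp_all add: divide_right_mono divide_strict_right_mono)
  define hr where "hr = a + (of_int kr + 1) / real n - x"
  define hl where "hl = x - (a + of_int kl / real n)"
  show ?thesis
  proof (rule that[of hr "edge_velocity p a n kr" hl "edge_velocity p a n kl"])
    show "hr > 0" "hl > 0" using kr kl by (simp_all add: hr_def hl_def)
    show "p (x + h) = p x + h *\<^sub>R edge_velocity p a n kr" if "0 \<le> h" "h \<le> hr" for h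
      using affine_edge_increment[OF n aff, of x kr "x + h"] kr that by (auto simp: hr_def algebra_simps)
    show "p (x - h) = p x - h *\<^sub>R edge_velocity p a n kl" if "0 \<le> h" "h \<le> hl" for h
      using affine_edge_increment[OF n aff, of x kl "x - h"] kl that by (auto simp: hl_def algebra_simps)
    show "norm (edge_velocity p a n kr - g' x) \<le> e + Lg / real n"
      using edge_velocity_close[OF n aff AE Lip] kr by simp
    show "norm (edge_velocity p a n kl - g' x) \<le> e + Lg / real n"
      using edge_velocity_close[OF n aff AE Lip] kl by simp
  qed
qed

lemma linear_coefficient_nonneg:
  fixes b c h0 :: real
  assumes "h0 > 0" and nonneg: "\<And>h. 0 < h \<Longrightarrow> h < h0 \<Longrightarrow> 0 \<le> b * h + c * h\<^sup>2"
  shows "0 \<le> b"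
proof (rule tendsto_lowerbound)
  show "((\<lambda>h. b + c * h) \<longlongrightarrow> b) (at_right 0)"
    by (auto intro!: tendsto_eq_intros)
  have "0 \<le> b + c * h" if "0 < h" "h < h0" for h
  proof -
    have "0 \<le> h * (b + c * h)" using nonneg[OF that] by (simp add: algebra_simps power2_eq_square)
    then show ?thesis using that by (simp add: zero_le_mult_iff)
  qed
  then show "\<forall>\<^sub>F h in at_right 0. 0 \<le> b + c * h"
    unfolding eventually_at_right_field using assms(1) by blast
qed simp

lemma local_extremum_signed:
  assumes "local_extremum f x"
  obtains \<epsilon> \<sigma> :: real where "\<epsilon> > 0" and "\<sigma> = 1 \<or> \<sigma> = -1"
    and "\<And>y. y \<in> ball x \<epsilon> \<Longrightarrow> 0 \<le> \<sigma> * (f x - f y)"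
proof -
  from assms obtain \<epsilon> where "\<epsilon> > 0"
    and "(\<forall>y\<in>ball x \<epsilon>. f y \<le> f x) \<or> (\<forall>y\<in>ball x \<epsilon>. f x \<le> f y)"
    unfolding local_extremum_def by blast
  then consider "\<forall>y\<in>ball x \<epsilon>. f y \<le> f x" | "\<forall>y\<in>ball x \<epsilon>. f x \<le> f y" by blast
  then show ?thesis
  proof cases
    case 1
    then show ?thesis using that[of \<epsilon> 1] \<open>\<epsilon> > 0\<close> by simp
  next
    case 2
    then show ?thesis using that[of \<epsilon> "-1"] \<open>\<epsilon> > 0\<close> by simp
  qed
qed

lemma norm_diff_scaleR_squared:
  fixes d u :: "'a::real_inner"
  shows "(norm (d - h *\<^sub>R u))\<^sup>2 = (norm d)\<^sup>2 - 2 * h * inner d u + h\<^sup>2 * (norm u)\<^sup>2"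
  unfolding power2_norm_eq_inner
  by (simp add: inner_diff_left inner_diff_right inner_commute power2_eq_square algebra_simps)

text \<open>First order condition at a local extremum of \<open>u \<mapsto> |D - p u|\<^sup>2\<close> for a curve with
  one-sided velocities \<open>w\<close> (right) and \<open>v\<close> (left): the one-sided derivatives \<open>-2\<langle>D - p x, w\<rangle>\<close>
  and \<open>2\<langle>D - p x, v\<rangle>\<close> have the same weak sign, i.e. the two inner products have opposite signs.\<close>
lemma local_extremum_one_sided_velocities:
  fixes p :: "real \<Rightarrow> 'a::real_inner"
  assumes ext: "local_extremum (\<lambda>u. (norm (D - p u))\<^sup>2) x"
    and "hr > 0" and right: "\<And>h. 0 \<le> h \<Longrightarrow> h \<le> hr \<Longrightarrow> p (x + h) = p x + h *\<^sub>R w"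
    and "hl > 0" and left: "\<And>h. 0 \<le> h \<Longrightarrow> h \<le> hl \<Longrightarrow> p (x - h) = p x - h *\<^sub>R v"
  shows "inner (D - p x) w * inner (D - p x) v \<le> 0"
proof -
  define d where "d = D - p x"
  define f where "f u = (norm (D - p u))\<^sup>2" for u
  obtain \<epsilon> \<sigma> :: real where "\<epsilon> > 0" and \<sigma>: "\<sigma> = 1 \<or> \<sigma> = -1"
    and sgn: "\<And>y. y \<in> ball x \<epsilon> \<Longrightarrow> 0 \<le> \<sigma> * (f x - f y)"
    using local_extremum_signed[OF ext] unfolding f_def by blast
  define h0 where "h0 = min \<epsilon> (min hr hl)"
  have h0: "h0 > 0" using \<open>\<epsilon> > 0\<close> \<open>hr > 0\<close> \<open>hl > 0\<close> by (simp add: h0_def)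
  have increment: "\<sigma> * (f x - (norm (d - h *\<^sub>R u))\<^sup>2) = (2 * \<sigma> * inner d u) * h + (- \<sigma> * (norm u)\<^sup>2) * h\<^sup>2"
    for h and u :: 'a
  proof -
    have "f x = (norm d)\<^sup>2" by (simp add: f_def d_def)
    then show ?thesis unfolding norm_diff_scaleR_squared by (simp add: algebra_simps)
  qed
  have "0 \<le> \<sigma> * inner d w"
  proof -
    have "0 \<le> (2 * \<sigma> * inner d w) * h + (- \<sigma> * (norm w)\<^sup>2) * h\<^sup>2" if "0 < h" "h < h0" for h
    proof -
      have "D - p (x + h) = d - h *\<^sub>R w" using right[of h] that by (simp add: d_def h0_def)
      moreover have "x + h \<in> ball x \<epsilon>" using that by (simp add: h0_def dist_real_def)
      ultimately show ?thesis using sgn[of "x + h"] increment[of h w] by (simp add: f_def)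
    qed
    then have "0 \<le> 2 * \<sigma> * inner d w" by (rule linear_coefficient_nonneg[OF h0])
    then show ?thesis by simp
  qed
  moreover have "0 \<le> - \<sigma> * inner d v"
  proof -
    have "0 \<le> (- 2 * \<sigma> * inner d v) * h + (- \<sigma> * (norm v)\<^sup>2) * h\<^sup>2" if "0 < h" "h < h0" for h
    proof -
      have "D - p (x - h) = d - (- h) *\<^sub>R v" using left[of h] that by (simp add: d_def h0_def)
      moreover have "x - h \<in> ball x \<epsilon>" using that by (simp add: h0_def dist_real_def)
      ultimately show ?thesis using sgn[of "x - h"] increment[of "- h" v] by (simp add: f_def)
    qed
    then have "0 \<le> - 2 * \<sigma> * inner d v" by (rule linear_coefficient_nonneg[OF h0])
    then show ?thesis by simp
  qed
  moreover have "inner d w * inner d v = - ((\<sigma> * inner d w) * (- \<sigma> * inner d v))"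
    using \<sigma> by auto
  ultimately show ?thesis unfolding d_def by (metis mult_nonneg_nonneg neg_le_0_iff_le)
qed

lemma inner_bound_from_opposite_signs:
  fixes d w v g :: "'a::real_inner"
  assumes opposite: "inner d w * inner d v \<le> 0"
    and w: "norm (w - g) \<le> E" and v: "norm (v - g) \<le> E"
  shows "\<bar>inner d g\<bar> \<le> E * norm d"
proof -
  have close: "\<bar>inner d u - inner d g\<bar> \<le> E * norm d" if "norm (u - g) \<le> E" for u
  proof -
    have "\<bar>inner d u - inner d g\<bar> \<le> norm d * norm (u - g)"
      using Cauchy_Schwarz_ineq2[of d "u - g"] by (simp add: inner_diff_right)
    also have "\<dots> \<le> E * norm d" using that by (metis mult.commute mult_left_mono norm_ge_zero)
    finally show ?thesis .
  qed
  show ?thesis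
    using opposite close[OF w] close[OF v] by (auto simp: mult_le_0_iff abs_le_iff)
qed

lemma polygon_extremum_bound:
  assumes "p \<in> polygons n"
    and AE: "AE y in lborel. norm (vector_derivative p (at y) - g' y) \<le> e"
    and Lip: "\<And>x y. norm (g' x - g' y) \<le> Lg * \<bar>x - y\<bar>"
    and ext: "local_extremum (\<lambda>u. (norm (D - p u))\<^sup>2) x"
  shows "\<bar>inner (g' x) (D - p x)\<bar> \<le> (e + Lg / real n) * norm (D - p x)"
proof -
  obtain a where n: "n > 0" and aff: "affine_edges p a n"
    using assms(1) by (rule polygons_affine_edges)
  obtain hr w hl v where "hr > 0" "\<And>h. 0 \<le> h \<Longrightarrow> h \<le> hr \<Longrightarrow> p (x + h) = p x + h *\<^sub>R w"
    "hl > 0" "\<And>h. 0 \<le> h \<Longrightarrow> h \<le> hl \<Longrightarrow> p (x - h) = p x - h *\<^sub>R v"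
    and w: "norm (w - g' x) \<le> e + Lg / real n" and v: "norm (v - g' x) \<le> e + Lg / real n"
    using polygon_one_sided_velocities[OF n aff AE Lip, where x = x] by blast
  then have "inner (D - p x) w * inner (D - p x) v \<le> 0"
    using local_extremum_one_sided_velocities[OF ext] by blast
  then have "\<bar>inner (D - p x) (g' x)\<bar> \<le> (e + Lg / real n) * norm (D - p x)"
    using w v by (rule inner_bound_from_opposite_signs)
  then show ?thesis by (simp add: inner_commute)
qed

text \<open>This is
  needed because criticality of polygons only locates points, not parameters. The proof minimises
  the distance to \<open>\<gamma> t\<close> over the compact set of bad parameters in \<open>[0,1]\<close>.\<close>
lemma continuous_through_injective_periodic:
  fixes \<gamma> g :: curve
  assumes per: "periodic1 \<gamma>" and inj: "inj_on \<gamma> {0..<1}" and cont: "continuous_on UNIV \<gamma>"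
    and gper: "periodic1 g" and gcont: "continuous_on UNIV g" and "\<epsilon> > 0"
  shows "\<exists>\<delta>>0. \<forall>x. norm (\<gamma> x - \<gamma> t) < \<delta> \<longrightarrow> norm (g x - g t) < \<epsilon>"
proof -
  define C where "C = {0..1} \<inter> {x. \<epsilon> \<le> norm (g x - g t)}"
  have "compact C"
    unfolding C_def by (intro compact_Int_closed closed_Collect_le continuous_intros gcont) auto
  have outside_C: "norm (g x - g t) < \<epsilon>" if "frac x \<notin> C" for x
    using that periodic1_frac[OF gper, of x] frac_lt_1[of x] by (auto simp: C_def)
  show ?thesis
  proof (cases "C = {}")
    case True
    then show ?thesis using outside_C by (intro exI[of _ 1]) auto
  next
    case False
    have "continuous_on C (\<lambda>x. norm (\<gamma> x - \<gamma> t))"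
      by (intro continuous_intros continuous_on_subset[OF cont]) auto
    then obtain x0 where "x0 \<in> C" and nearest: "\<And>y. y \<in> C \<Longrightarrow> norm (\<gamma> x0 - \<gamma> t) \<le> norm (\<gamma> y - \<gamma> t)"
      using continuous_attains_inf[OF \<open>compact C\<close> False] by blast
    have "\<gamma> x0 \<noteq> \<gamma> t"
    proof
      assume "\<gamma> x0 = \<gamma> t"
      then have "g x0 = g t" using periodic1_inj_eq[OF per inj] periodic1_S1_eq[OF gper] by blast
      then show False using \<open>x0 \<in> C\<close> \<open>\<epsilon> > 0\<close> by (simp add: C_def)
    qed
    moreover have "norm (g x - g t) < \<epsilon>" if "norm (\<gamma> x - \<gamma> t) < norm (\<gamma> x0 - \<gamma> t)" for x
      using that nearest[of "frac x"] outside_C periodic1_frac[OF per, of x] by force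
    ultimately show ?thesis by (intro exI[of _ "norm (\<gamma> x0 - \<gamma> t)"]) auto
  qed
qed

lemma orthogonal_by_approximation:
  fixes \<gamma> :: "real \<Rightarrow> 'a::real_normed_vector" and g :: "real \<Rightarrow> 'b::real_inner"
  assumes cont: "\<And>\<epsilon>. \<epsilon> > 0 \<Longrightarrow> \<exists>\<delta>>0. \<forall>x. norm (\<gamma> x - \<gamma> t) < \<delta> \<longrightarrow> norm (g x - g t) < \<epsilon>"
    and approx: "\<And>\<eta>. \<eta> > 0 \<Longrightarrow>
      \<exists>x d. norm (\<gamma> x - \<gamma> t) \<le> \<eta> \<and> norm (d - D) \<le> \<eta> \<and> \<bar>inner (g x) d\<bar> \<le> \<eta> * norm d"
  shows "inner (g t) D = 0"
proof -
  define \<eta> where "\<eta> k = 1 / real (Suc k)" for k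
  have \<eta>0: "\<eta> \<longlonglongrightarrow> 0"
    unfolding \<eta>_def using LIMSEQ_inverse_real_of_nat by (simp add: inverse_eq_divide)
  obtain X d where X: "\<And>k. norm (\<gamma> (X k) - \<gamma> t) \<le> \<eta> k"
    and d: "\<And>k. norm (d k - D) \<le> \<eta> k" and small: "\<And>k. \<bar>inner (g (X k)) (d k)\<bar> \<le> \<eta> k * norm (d k)"
    using approx[of "\<eta> _"] unfolding \<eta>_def by (metis of_nat_0_less_iff zero_less_Suc divide_pos_pos zero_less_one)
  have "(\<lambda>k. \<gamma> (X k) - \<gamma> t) \<longlonglongrightarrow> 0" using X by (intro Lim_null_comparison[OF _ \<eta>0]) auto
  have gX: "(\<lambda>k. g (X k)) \<longlonglongrightarrow> g t"
  proof (rule tendstoI)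
    fix \<epsilon> :: real assume "\<epsilon> > 0"
    then obtain \<delta> where "\<delta> > 0" and \<delta>: "\<forall>x. norm (\<gamma> x - \<gamma> t) < \<delta> \<longrightarrow> norm (g x - g t) < \<epsilon>"
      using cont by blast
    have "\<forall>\<^sub>F k in sequentially. norm (\<gamma> (X k) - \<gamma> t) < \<delta>"
      using tendstoD[OF \<open>(\<lambda>k. \<gamma> (X k) - \<gamma> t) \<longlonglongrightarrow> 0\<close> \<open>\<delta> > 0\<close>] by (simp add: dist_norm)
    then show "\<forall>\<^sub>F k in sequentially. dist (g (X k)) (g t) < \<epsilon>"
      by eventually_elim (use \<delta> in \<open>simp add: dist_norm\<close>)
  qed
  have "(\<lambda>k. d k - D) \<longlonglongrightarrow> 0" using d by (intro Lim_null_comparison[OF _ \<eta>0]) auto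
  then have dD: "d \<longlonglongrightarrow> D" by (simp add: LIM_zero_iff)
  have "(\<lambda>k. inner (g (X k)) (d k)) \<longlonglongrightarrow> inner (g t) D" using gX dD by (rule tendsto_inner)
  moreover have "(\<lambda>k. inner (g (X k)) (d k)) \<longlonglongrightarrow> 0"
  proof (rule Lim_null_comparison)
    show "\<forall>\<^sub>F k in sequentially. norm (inner (g (X k)) (d k)) \<le> \<eta> k * norm (d k)"
      using small by simp
    show "(\<lambda>k. \<eta> k * norm (d k)) \<longlonglongrightarrow> 0"
      using tendsto_mult[OF \<eta>0 tendsto_norm[OF dD]] by simp
  qed
  ultimately show ?thesis by (rule LIMSEQ_unique)
qed

lemma W1inf_tendsto_uniform:
  assumes "W1inf_tendsto p \<gamma>" and "e > 0"
  shows "\<forall>\<^sub>F n in sequentially. \<forall>x. norm (p n x - \<gamma> x) \<le> e"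
proof -
  have "\<forall>\<^sub>F n in sequentially. (\<forall>x. norm (p n x - \<gamma> x) \<le> e) \<and>
      (AE x in lborel. norm (vector_derivative (p n) (at x) - vector_derivative \<gamma> (at x)) \<le> e)"
    using assms unfolding W1inf_tendsto_def by blast
  then show ?thesis by (rule eventually_mono) blast
qed

lemma W1inf_tendsto_S1_values:
  assumes W: "W1inf_tendsto p \<gamma>" and cont: "continuous_on UNIV \<gamma>" and per: "periodic1 \<gamma>"
    and S: "S1_tendsto sn s"
  shows "(\<lambda>n. p n (sn n)) \<longlonglongrightarrow> \<gamma> s"
proof -
  from S obtain k :: "nat \<Rightarrow> int" where k: "(\<lambda>n. sn n - of_int (k n)) \<longlonglongrightarrow> s"
    unfolding S1_tendsto_def by blast
  have "(\<lambda>n. \<gamma> (sn n - of_int (k n))) \<longlonglongrightarrow> \<gamma> s"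
    using cont k by (auto intro: continuous_on_tendsto_compose)
  moreover have "\<gamma> (sn n - of_int (k n)) = \<gamma> (sn n)" for n
    using periodic1_shift_int[OF per, of "sn n" "- k n"] by simp
  ultimately have "(\<lambda>n. \<gamma> (sn n)) \<longlonglongrightarrow> \<gamma> s" by simp
  moreover have "(\<lambda>n. p n (sn n) - \<gamma> (sn n)) \<longlonglongrightarrow> 0"
  proof (rule tendstoI)
    fix e :: real assume "e > 0"
    then have "\<forall>\<^sub>F n in sequentially. \<forall>x. norm (p n x - \<gamma> x) \<le> e / 2"
      by (intro W1inf_tendsto_uniform[OF W]) simp
    then show "\<forall>\<^sub>F n in sequentially. dist (p n (sn n) - \<gamma> (sn n)) 0 < e"
    proof eventually_elim
      case (elim n)
      then have "norm (p n (sn n) - \<gamma> (sn n)) \<le> e / 2" by blast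
      then show ?case using \<open>e > 0\<close> by (simp add: dist_norm)
    qed
  qed
  ultimately show ?thesis using tendsto_add by fastforce
qed

lemma dcrit_poly_swap:
  assumes "(P, Q) \<in> dcrit_poly p"
  shows "(Q, P) \<in> dcrit_poly p"
proof -
  from assms obtain t s where PQ: "P = p t" "Q = p s" "p t \<noteq> p s"
    and ext_s: "local_extremum (\<lambda>u. (norm (p t - p u))\<^sup>2) s"
    and ext_t: "local_extremum (\<lambda>v. (norm (p v - p s))\<^sup>2) t"
    unfolding dcrit_poly_def mem_Collect_eq prod.inject by blast
  have "local_extremum (\<lambda>u. (norm (p s - p u))\<^sup>2) t" "local_extremum (\<lambda>v. (norm (p v - p t))\<^sup>2) s"
    using ext_s ext_t by (simp_all add: norm_minus_commute)
  then show ?thesis unfolding dcrit_poly_def mem_Collect_eq prod.inject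
    using PQ by (intro exI[of _ s] exI[of _ t]) simp
qed

lemma dcrit_poly_second_point:
  assumes "(P, Q) \<in> dcrit_poly p"
  obtains s' where "p s' = Q" and "local_extremum (\<lambda>u. (norm (P - p u))\<^sup>2) s'"
  using assms unfolding dcrit_poly_def mem_Collect_eq prod.inject by blast

lemma critical_pair_approximation:
  fixes \<gamma> g q :: curve
  assumes "q \<in> polygons n" and crit: "(q a, q b) \<in> dcrit_poly q"
    and uniform: "\<And>x. norm (q x - \<gamma> x) \<le> \<eta> / 2"
    and AE: "AE x in lborel. norm (vector_derivative q (at x) - g x) \<le> \<eta> / 2"
    and Lip: "\<And>x y. norm (g x - g y) \<le> Lg * \<bar>x - y\<bar>" and fine: "Lg / real n \<le> \<eta> / 2"
    and near_A: "norm (q a - A) \<le> \<eta> / 2" and near_B: "norm (q b - B) \<le> \<eta> / 2"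
  shows "\<exists>x d. norm (\<gamma> x - B) \<le> \<eta> \<and> norm (d - (A - B)) \<le> \<eta> \<and> \<bar>inner (g x) d\<bar> \<le> \<eta> * norm d"
proof -
  obtain b' where b': "q b' = q b" and ext: "local_extremum (\<lambda>u. (norm (q a - q u))\<^sup>2) b'"
    using crit by (rule dcrit_poly_second_point)
  define d where "d = q a - q b'"
  have "\<bar>inner (g b') d\<bar> \<le> (\<eta> / 2 + Lg / real n) * norm d"
    unfolding d_def using \<open>q \<in> polygons n\<close> AE Lip ext by (rule polygon_extremum_bound)
  also have "\<dots> \<le> \<eta> * norm d" using fine by (intro mult_right_mono) (linarith, simp)
  finally have "\<bar>inner (g b') d\<bar> \<le> \<eta> * norm d" .
  moreover have "norm (\<gamma> b' - B) \<le> \<eta>"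
    using norm_triangle_ineq4[of "q b' - B" "q b' - \<gamma> b'"] uniform[of b'] near_B b'
    by (simp add: norm_minus_commute)
  moreover have "norm (d - (A - B)) \<le> \<eta>"
    using norm_triangle_ineq4[of "q a - A" "q b - B"] near_A near_B b'
    by (simp add: d_def algebra_simps)
  ultimately show ?thesis by blast
qed

lemma dcrit_poly_approximation:
  fixes \<gamma> :: curve and p :: "nat \<Rightarrow> curve"
  assumes Lip: "\<And>x y. norm (vector_derivative \<gamma> (at x) - vector_derivative \<gamma> (at y)) \<le> Lg * \<bar>x - y\<bar>"
    and cont: "continuous_on UNIV \<gamma>" and per: "periodic1 \<gamma>"
    and poly: "\<forall>\<^sub>F n in sequentially. p n \<in> polygons n" and W: "W1inf_tendsto p \<gamma>"
    and sn: "S1_tendsto sn s" and tn: "S1_tendsto tn t"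
    and crit: "\<forall>\<^sub>F n in sequentially. (p n (sn n), p n (tn n)) \<in> dcrit_poly (p n)"
    and "\<eta> > 0"
  shows "\<exists>x d. norm (\<gamma> x - \<gamma> t) \<le> \<eta> \<and> norm (d - (\<gamma> s - \<gamma> t)) \<le> \<eta> \<and>
    \<bar>inner (vector_derivative \<gamma> (at x)) d\<bar> \<le> \<eta> * norm d"
proof -
  have "\<eta> / 2 > 0" using \<open>\<eta> > 0\<close> by simp
  have "\<forall>\<^sub>F n in sequentially. (\<forall>x. norm (p n x - \<gamma> x) \<le> \<eta> / 2) \<and>
      (AE x in lborel. norm (vector_derivative (p n) (at x) - vector_derivative \<gamma> (at x)) \<le> \<eta> / 2)"
    using W \<open>\<eta> / 2 > 0\<close> unfolding W1inf_tendsto_def by blast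
  moreover note poly crit
    tendstoD[OF W1inf_tendsto_S1_values[OF W cont per sn] \<open>\<eta> / 2 > 0\<close>]
    tendstoD[OF W1inf_tendsto_S1_values[OF W cont per tn] \<open>\<eta> / 2 > 0\<close>]
    tendstoD[OF lim_const_over_n[of Lg] \<open>\<eta> / 2 > 0\<close>]
  ultimately have "\<forall>\<^sub>F n in sequentially. ((\<forall>x. norm (p n x - \<gamma> x) \<le> \<eta> / 2) \<and>
      (AE x in lborel. norm (vector_derivative (p n) (at x) - vector_derivative \<gamma> (at x)) \<le> \<eta> / 2)) \<and>
      p n \<in> polygons n \<and> (p n (sn n), p n (tn n)) \<in> dcrit_poly (p n) \<and>
      dist (p n (sn n)) (\<gamma> s) < \<eta> / 2 \<and> dist (p n (tn n)) (\<gamma> t) < \<eta> / 2 \<and>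
      dist (Lg / real n) 0 < \<eta> / 2"
    by eventually_elim blast
  from eventually_happens'[OF sequentially_bot this] obtain n
    where "\<And>x. norm (p n x - \<gamma> x) \<le> \<eta> / 2"
      and "AE x in lborel. norm (vector_derivative (p n) (at x) - vector_derivative \<gamma> (at x)) \<le> \<eta> / 2"
      and "p n \<in> polygons n" and "(p n (sn n), p n (tn n)) \<in> dcrit_poly (p n)"
      and "norm (p n (sn n) - \<gamma> s) < \<eta> / 2" and "norm (p n (tn n) - \<gamma> t) < \<eta> / 2"
      and fine: "dist (Lg / real n) 0 < \<eta> / 2"
    by (auto simp: dist_norm)
  moreover have "Lg / real n \<le> \<eta> / 2"
    using fine by (metis abs_ge_self dist_real_def diff_zero order.trans less_imp_le)
  ultimately show ?thesis
    using Lip by (intro critical_pair_approximation) (auto intro: less_imp_le)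
qed

lemma dcrit_limit_orthogonal:
  fixes \<gamma> :: curve and p :: "nat \<Rightarrow> curve"
  assumes "C11 \<gamma>" and per: "periodic1 \<gamma>" and inj: "inj_on \<gamma> {0..<1}"
    and poly: "\<forall>\<^sub>F n in sequentially. p n \<in> polygons n" and W: "W1inf_tendsto p \<gamma>"
    and sn: "S1_tendsto sn s" and tn: "S1_tendsto tn t"
    and crit: "\<forall>\<^sub>F n in sequentially. (p n (sn n), p n (tn n)) \<in> dcrit_poly (p n)"
  shows "inner (vector_derivative \<gamma> (at t)) (\<gamma> s - \<gamma> t) = 0"
proof -
  obtain Lg where der: "\<And>t. (\<gamma> has_vector_derivative vector_derivative \<gamma> (at t)) (at t)"
    and Lip: "\<And>x y. norm (vector_derivative \<gamma> (at x) - vector_derivative \<gamma> (at y)) \<le> Lg * \<bar>x - y\<bar>"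
    and gcont: "continuous_on UNIV (\<lambda>t. vector_derivative \<gamma> (at t))"
    and gper: "periodic1 (\<lambda>t. vector_derivative \<gamma> (at t))"
    using C11_periodic_derivative[OF assms(1) per] by blast
  have cont: "continuous_on UNIV \<gamma>"
    using der has_vector_derivative_continuous continuous_at_imp_continuous_on by blast
  show ?thesis
  proof (rule orthogonal_by_approximation)
    show "\<exists>\<delta>>0. \<forall>x. norm (\<gamma> x - \<gamma> t) < \<delta> \<longrightarrow>
        norm (vector_derivative \<gamma> (at x) - vector_derivative \<gamma> (at t)) < \<epsilon>" if "\<epsilon> > 0" for \<epsilon>
      using continuous_through_injective_periodic[OF per inj cont gper gcont that] by simp
    show "\<exists>x d. norm (\<gamma> x - \<gamma> t) \<le> \<eta> \<and> norm (d - (\<gamma> s - \<gamma> t)) \<le> \<eta> \<and>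
        \<bar>inner (vector_derivative \<gamma> (at x)) d\<bar> \<le> \<eta> * norm d" if "\<eta> > 0" for \<eta>
      using Lip cont per poly W sn tn crit that by (rule dcrit_poly_approximation)
  qed
qed

theorem lemma13:
  fixes K :: "(real^3) set set" and \<gamma> :: curve
    and p :: "nat \<Rightarrow> curve" and s t :: real and sn tn :: "nat \<Rightarrow> real"
  assumes "tame_knot_class K"
    and "\<gamma> \<in> curves_in_class K" and "C11 \<gamma>"
    and "\<forall>\<^sub>F n in sequentially. p n \<in> polygons n"
    and "W1inf_tendsto p \<gamma>"
    and "\<forall>\<^sub>F n in sequentially. \<not> S1_eq (sn n) (tn n)"
    and "S1_tendsto sn s" and "S1_tendsto tn t" and "\<not> S1_eq s t"
    and "\<forall>\<^sub>F n in sequentially. (p n (sn n), p n (tn n)) \<in> dcrit_poly (p n)"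
  shows "(\<gamma> s, \<gamma> t) \<in> dcrit_C1 \<gamma>"
proof -
  have "\<gamma> \<in> arclength_curves" and inj: "inj_on \<gamma> {0..<1}"
    using assms(2) unfolding curves_in_class_def by blast+
  then have per: "periodic1 \<gamma>" unfolding arclength_curves_def by blast
  have "\<gamma> s \<noteq> \<gamma> t" using periodic1_inj_eq[OF per inj] assms(9) by blast
  moreover have "inner (vector_derivative \<gamma> (at t)) (\<gamma> s - \<gamma> t) = 0"
    using assms(3) per inj assms(4,5,7,8,10) by (rule dcrit_limit_orthogonal)
  moreover have "inner (vector_derivative \<gamma> (at s)) (\<gamma> t - \<gamma> s) = 0"
  proof (rule dcrit_limit_orthogonal[OF assms(3) per inj assms(4,5,8,7)])
    show "\<forall>\<^sub>F n in sequentially. (p n (tn n), p n (sn n)) \<in> dcrit_poly (p n)"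
      using assms(10) by (rule eventually_mono) (rule dcrit_poly_swap)
  qed
  then have "inner (vector_derivative \<gamma> (at s)) (\<gamma> s - \<gamma> t) = 0"
    by (simp add: inner_diff_right)
  ultimately show ?thesis unfolding dcrit_C1_def mem_Collect_eq prod.inject
    by (intro exI[of _ s] exI[of _ t]) simp
qed

end
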